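(* Let $(X,x^* )$ be a pointed topological space and $n\geq 1$. Then $\pi_n^{top}(X,x^* )$ is a homogeneous space, i.e. for any two elements $a,b\in\pi_n^{top}(X,x^* )$ there is a homeomorphism of $\pi_n^{top}(X,x^* )$ onto itself sending $a$ to $b$.
   Context: $\pi_n^{top}(X,x^* )$ denotes the $n$-th homotopy group $\pi_n(X,x^* )$ endowed with the quotient topology induced by the map $\Omega^n(X,x^* )\to\pi_n(X,x^* )$, $f\mapsto[f]$, where $\Omega^n(X,x^* )$ is the space of maps $(I^n,\partial I^n)\to(X,x^* )$ with the compact-open topology. *)

theory Defs
  imports "HOL-Analysis.Analysis"
begin

text \<open>The standard n-cube I^n, as a subspace of functions nat to real (extensional outside {..<n}).\<close>
definition cube_top :: "nat \<Rightarrow> (nat \<Rightarrow> real) topology" where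
  "cube_top n = product_topology (\<lambda>i. top_of_set {0..1::real}) {..<n}"

definition cube_boundary :: "nat \<Rightarrow> (nat \<Rightarrow> real) set" where
  "cube_boundary n = {t \<in> topspace (cube_top n). \<exists>i<n. t i = 0 \<or> t i = 1}"

definition Omega_set :: "nat \<Rightarrow> 'a topology \<Rightarrow> 'a \<Rightarrow> ((nat \<Rightarrow> real) \<Rightarrow> 'a) set" where
  "Omega_set n X x0 = {f. continuous_map (cube_top n) X f \<and> (\<forall>t\<in>cube_boundary n. f t = x0)}"

definition compact_open_topology :: "'b topology \<Rightarrow> 'a topology \<Rightarrow> ('b \<Rightarrow> 'a) topology" where
  "compact_open_topology K X =
     topology_generated_by {{f. f ` C \<subseteq> U} | C U. compactin K C \<and> openin X U}"

definition Omega_top :: "nat \<Rightarrow> 'a topology \<Rightarrow> 'a \<Rightarrow> ((nat \<Rightarrow> real) \<Rightarrow> 'a) topology" where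
  "Omega_top n X x0 = subtopology (compact_open_topology (cube_top n) X) (Omega_set n X x0)"

definition rel_homotopic :: "nat \<Rightarrow> 'a topology \<Rightarrow> 'a \<Rightarrow> ((nat \<Rightarrow> real) \<Rightarrow> 'a) \<Rightarrow> ((nat \<Rightarrow> real) \<Rightarrow> 'a) \<Rightarrow> bool" where
  "rel_homotopic n X x0 f g =
     homotopic_with (\<lambda>h. \<forall>t\<in>cube_boundary n. h t = x0) (cube_top n) X f g"

definition htp_class :: "nat \<Rightarrow> 'a topology \<Rightarrow> 'a \<Rightarrow> ((nat \<Rightarrow> real) \<Rightarrow> 'a) \<Rightarrow> ((nat \<Rightarrow> real) \<Rightarrow> 'a) set" where
  "htp_class n X x0 f = {g \<in> Omega_set n X x0. rel_homotopic n X x0 f g}"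

definition quotient_topology :: "'a topology \<Rightarrow> ('a \<Rightarrow> 'b) \<Rightarrow> 'b topology" where
  "quotient_topology T q =
     topology (\<lambda>U. U \<subseteq> q ` topspace T \<and> openin T {x \<in> topspace T. q x \<in> U})"

lemma istopology_quotient:
  "istopology (\<lambda>U. U \<subseteq> q ` topspace T \<and> openin T {x \<in> topspace T. q x \<in> U})"
proof -
  have 1: "{x \<in> topspace T. q x \<in> S \<and> q x \<in> S'} = {x \<in> topspace T. q x \<in> S} \<inter> {x \<in> topspace T. q x \<in> S'}" for S S'
    by auto
  have 2: "{x \<in> topspace T. \<exists>X\<in>K. q x \<in> X} = \<Union>((\<lambda>S. {x \<in> topspace T. q x \<in> S}) ` K)" for K
    by auto
  show ?thesis
    unfolding istopology_def by (auto simp only: 1 2 Int_iff Union_iff intro!: openin_Union openin_Int)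
qed

definition pi_top :: "nat \<Rightarrow> 'a topology \<Rightarrow> 'a \<Rightarrow> ((nat \<Rightarrow> real) \<Rightarrow> 'a) set topology" where
  "pi_top n X x0 = quotient_topology (Omega_top n X x0) (htp_class n X x0)"

definition homogeneous_space :: "'a topology \<Rightarrow> bool" where
  "homogeneous_space T \<longleftrightarrow>
     (\<forall>a\<in>topspace T. \<forall>b\<in>topspace T. \<exists>h. homeomorphic_map T T h \<and> h a = b)"

end

theory Submission
  imports Defs
begin

text \<open>For a fixed \<open>g \<in> \<Omega>\<^sup>n\<close>, concatenation \<open>f \<mapsto> g * f\<close> along the first coordinate is
  continuous for the compact-open topology and respects homotopy relative to the boundary, so it
  descends to a continuous self-map of \<open>\<pi>\<^sub>n\<^sup>t\<^sup>o\<^sup>p\<close>; concatenation with the reverse of \<open>g\<close>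
  descends to its inverse. Thus left translations are homeomorphisms (only translations are
  needed, not joint continuity of the group operation), and translating first by the reverse
  of \<open>f\<close> and then by \<open>g\<close> sends \<open>[f]\<close> to \<open>[g * (g\<^sup>- * g)] = [g]\<close>.\<close>

section \<open>Quotient and compact-open topologies\<close>

lemma openin_quotient_topology:
  "openin (quotient_topology T q) U \<longleftrightarrow> U \<subseteq> q ` topspace T \<and> openin T {x \<in> topspace T. q x \<in> U}"
  unfolding quotient_topology_def by (simp add: topology_inverse'[OF istopology_quotient])

lemma topspace_quotient_topology: "topspace (quotient_topology T q) = q ` topspace T"
proof
  show "topspace (quotient_topology T q) \<subseteq> q ` topspace T"
    unfolding topspace_def[of "quotient_topology T q"]
    by (rule Union_least) (simp add: openin_quotient_topology)
  have "{x \<in> topspace T. q x \<in> q ` topspace T} = topspace T"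
    by blast
  then have "openin (quotient_topology T q) (q ` topspace T)"
    by (simp add: openin_quotient_topology)
  then show "q ` topspace T \<subseteq> topspace (quotient_topology T q)"
    by (rule openin_subset)
qed

lemma continuous_map_quotient_topology_lift:
  assumes f: "continuous_map S T f"
    and resp: "\<And>x y. \<lbrakk>x \<in> topspace S; y \<in> topspace S; p x = p y\<rbrakk> \<Longrightarrow> q (f x) = q (f y)"
  obtains g where "continuous_map (quotient_topology S p) (quotient_topology T q) g"
    and "\<And>x. x \<in> topspace S \<Longrightarrow> g (p x) = q (f x)"
proof -
  define g where "g A = q (f (SOME x. x \<in> topspace S \<and> p x = A))" for A
  have gp: "g (p x) = q (f x)" if x: "x \<in> topspace S" for x
  proof -
    have "(SOME y. y \<in> topspace S \<and> p y = p x) \<in> topspace S \<and> p (SOME y. y \<in> topspace S \<and> p y = p x) = p x"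
      by (rule someI[of _ x]) (simp add: x)
    then show ?thesis
      unfolding g_def using resp x by blast
  qed
  have "continuous_map (quotient_topology S p) (quotient_topology T q) g"
    unfolding continuous_map_def topspace_quotient_topology
  proof (intro conjI allI impI)
    show "g \<in> p ` topspace S \<rightarrow> q ` topspace T"
      using f gp by (auto simp: continuous_map_def)
    fix U assume "openin (quotient_topology T q) U"
    then have "openin T {y \<in> topspace T. q y \<in> U}"
      by (simp add: openin_quotient_topology)
    then have "openin S {x \<in> topspace S. f x \<in> {y \<in> topspace T. q y \<in> U}}"
      by (rule openin_continuous_map_preimage[OF f])
    moreover have "{x \<in> topspace S. f x \<in> {y \<in> topspace T. q y \<in> U}} =
                     {x \<in> topspace S. p x \<in> {A \<in> p ` topspace S. g A \<in> U}}"
    proof (intro Collect_cong conj_cong refl)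
      fix x assume "x \<in> topspace S"
      then show "f x \<in> {y \<in> topspace T. q y \<in> U} \<longleftrightarrow> p x \<in> {A \<in> p ` topspace S. g A \<in> U}"
        using f by (auto simp: gp continuous_map_def)
    qed
    ultimately show "openin (quotient_topology S p) {A \<in> p ` topspace S. g A \<in> U}"
      by (simp add: openin_quotient_topology)
  qed
  with gp show thesis
    using that by blast
qed

lemma topspace_compact_open_topology [simp]: "topspace (compact_open_topology K X) = UNIV"
proof -
  have "UNIV \<in> {{f. f ` C \<subseteq> U} | C U. compactin K C \<and> openin X U}"
    by (rule CollectI, rule exI[of _ "{}"], rule exI[of _ "topspace X"]) auto
  then show ?thesis
    unfolding compact_open_topology_def by auto
qed

lemma openin_compact_open_topology:
  "\<lbrakk>compactin K C; openin X U\<rbrakk> \<Longrightarrow> openin (compact_open_topology K X) {f. f ` C \<subseteq> U}"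
  unfolding compact_open_topology_def by (rule topology_generated_by_Basis) blast

section \<open>The cube\<close>

lemma topspace_cube_top: "topspace (cube_top n) = (\<Pi>\<^sub>E i\<in>{..<n}. {0..1::real})"
  by (simp add: cube_top_def)

lemma cube_coord_in_unit: "\<lbrakk>t \<in> topspace (cube_top n); i < n\<rbrakk> \<Longrightarrow> t i \<in> {0..1}"
  by (auto simp: topspace_cube_top PiE_iff)

lemma fun_upd_in_cube:
  "\<lbrakk>t \<in> topspace (cube_top n); i < n; v \<in> {0..1}\<rbrakk> \<Longrightarrow> t(i := v) \<in> topspace (cube_top n)"
  by (auto simp: topspace_cube_top PiE_iff extensional_def)

lemma fun_upd_in_cube_boundary:
  "\<lbrakk>t \<in> topspace (cube_top n); i < n; v \<in> {0,1}\<rbrakk> \<Longrightarrow> t(i := v) \<in> cube_boundary n"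
  unfolding cube_boundary_def by (force intro: fun_upd_in_cube)

lemma cube_boundary_fun_upd:
  assumes "t \<in> cube_boundary n" "i < n" "v \<in> {0..1}" "t i \<in> {0,1} \<Longrightarrow> v \<in> {0,1}"
  shows "t(i := v) \<in> cube_boundary n"
proof -
  obtain j where "j < n" "t j \<in> {0,1}" "t \<in> topspace (cube_top n)"
    using assms(1) by (auto simp: cube_boundary_def)
  then show ?thesis
    using assms(2-4) unfolding cube_boundary_def
    by (cases "j = i") (auto intro!: fun_upd_in_cube)
qed

lemma continuous_map_cube_coord:
  "i < n \<Longrightarrow> continuous_map (cube_top n) (top_of_set {0..1}) (\<lambda>t. t i)"
  unfolding cube_top_def by (intro continuous_map_product_projection) auto

lemma continuous_map_cube_fun_upd:
  assumes "i < n" and \<sigma>: "continuous_map Z (cube_top n) \<sigma>" and "continuous_map Z euclideanreal v"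
    and "\<And>z. z \<in> topspace Z \<Longrightarrow> v z \<in> {0..1}"
  shows "continuous_map Z (cube_top n) (\<lambda>z. (\<sigma> z)(i := v z))"
  unfolding cube_top_def continuous_map_componentwise
proof (intro conjI ballI)
  show "(\<lambda>z. (\<sigma> z)(i := v z)) ` topspace Z \<subseteq> extensional {..<n}"
    using assms(1) \<sigma> unfolding cube_top_def continuous_map_componentwise
    by (auto simp: extensional_def)
  fix k assume k: "k \<in> {..<n}"
  show "continuous_map Z (top_of_set {0..1}) (\<lambda>z. ((\<sigma> z)(i := v z)) k)"
  proof (cases "k = i")
    case True
    then show ?thesis using assms(3,4) by (simp add: continuous_map_in_subtopology image_subset_iff)
  next
    case False
    then show ?thesis using \<sigma> k unfolding cube_top_def continuous_map_componentwise by simp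
  qed
qed

lemma continuous_map_prod_cube_coord:
  "i < n \<Longrightarrow> continuous_map (prod_topology Z (cube_top n)) euclideanreal (\<lambda>z. snd z i)"
  using continuous_map_compose[OF continuous_map_snd continuous_map_cube_coord]
  unfolding o_def continuous_map_in_subtopology by blast

lemma prod_cube_coord_in_unit:
  "\<lbrakk>z \<in> topspace (prod_topology Z (cube_top n)); i < n\<rbrakk> \<Longrightarrow> snd z i \<in> {0..1}"
  by (rule cube_coord_in_unit) (simp_all add: topspace_prod_topology mem_Times_iff)

lemma continuous_map_prod_cube_rescale:
  assumes n: "0 < n" and v: "continuous_on UNIV v"
    and K: "continuous_map (prod_topology Z (cube_top n)) X K"
    and S: "\<And>z. \<lbrakk>z \<in> topspace (prod_topology Z (cube_top n)); z \<in> S\<rbrakk> \<Longrightarrow> v (snd z 0) \<in> {0..1}"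
  shows "continuous_map (subtopology (prod_topology Z (cube_top n)) S) X
           (\<lambda>z. K (fst z, (snd z)(0 := v (snd z 0))))"
proof -
  let ?S = "subtopology (prod_topology Z (cube_top n)) S"
  have "continuous_map ?S (prod_topology Z (cube_top n)) (\<lambda>z. (fst z, (snd z)(0 := v (snd z 0))))"
  proof (intro continuous_map_pairedI continuous_map_cube_fun_upd[OF n])
    show "continuous_map ?S Z fst" "continuous_map ?S (cube_top n) snd"
      by (simp_all add: continuous_map_from_subtopology continuous_map_fst continuous_map_snd)
    show "continuous_map ?S euclideanreal (\<lambda>z. v (snd z 0))"
      using continuous_map_compose[OF continuous_map_prod_cube_coord[OF n, where Z = Z]
          v[folded continuous_map_iff_continuous2]]
      by (intro continuous_map_from_subtopology) (simp add: o_def)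
  qed (use S in auto)
  then show ?thesis
    using continuous_map_compose[OF _ K] by (simp add: o_def)
qed

section \<open>Homotopy relative to the boundary\<close>

lemma Omega_set_continuous_map: "f \<in> Omega_set n X x0 \<Longrightarrow> continuous_map (cube_top n) X f"
  by (simp add: Omega_set_def)

lemma Omega_set_boundary: "\<lbrakk>f \<in> Omega_set n X x0; t \<in> cube_boundary n\<rbrakk> \<Longrightarrow> f t = x0"
  by (simp add: Omega_set_def)

lemma Omega_set_face:
  "\<lbrakk>f \<in> Omega_set n X x0; t \<in> topspace (cube_top n); i < n; v \<in> {0,1}\<rbrakk> \<Longrightarrow> f (t(i := v)) = x0"
  by (simp add: Omega_set_boundary fun_upd_in_cube_boundary)

lemma rel_homotopic_imp_Omega_set:
  assumes "rel_homotopic n X x0 f g"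
  shows "f \<in> Omega_set n X x0" "g \<in> Omega_set n X x0"
  using homotopic_with_imp_continuous_maps[OF assms[unfolded rel_homotopic_def]]
    homotopic_with_imp_property[OF assms[unfolded rel_homotopic_def]]
  by (auto simp: Omega_set_def)

lemma rel_homotopic_refl: "f \<in> Omega_set n X x0 \<Longrightarrow> rel_homotopic n X x0 f f"
  by (simp add: rel_homotopic_def Omega_set_def)

lemma rel_homotopic_sym: "rel_homotopic n X x0 f g \<Longrightarrow> rel_homotopic n X x0 g f"
  unfolding rel_homotopic_def by (rule homotopic_with_symD)

lemma rel_homotopic_trans [trans]:
  "\<lbrakk>rel_homotopic n X x0 f g; rel_homotopic n X x0 g h\<rbrakk> \<Longrightarrow> rel_homotopic n X x0 f h"
  unfolding rel_homotopic_def by (rule homotopic_with_trans)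

lemma htp_class_eq_iff:
  assumes "f \<in> Omega_set n X x0" "g \<in> Omega_set n X x0"
  shows "htp_class n X x0 f = htp_class n X x0 g \<longleftrightarrow> rel_homotopic n X x0 f g"
proof
  assume "htp_class n X x0 f = htp_class n X x0 g"
  moreover have "g \<in> htp_class n X x0 g"
    using assms(2) by (simp add: htp_class_def rel_homotopic_refl)
  ultimately show "rel_homotopic n X x0 f g"
    unfolding htp_class_def by blast
next
  assume "rel_homotopic n X x0 f g"
  then show "htp_class n X x0 f = htp_class n X x0 g"
    unfolding htp_class_def by (meson rel_homotopic_sym rel_homotopic_trans)
qed

text \<open>All homotopies needed for the group laws below are reparametrizations of the first
  coordinate of a single map.\<close>

lemma rel_homotopic_reparametrize:
  fixes \<alpha> :: "real \<Rightarrow> real \<Rightarrow> real"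
  assumes n: "0 < n" and f: "f \<in> Omega_set n X x0"
    and cont: "continuous_on ({0..1} \<times> {0..1}) (\<lambda>z. \<alpha> (fst z) (snd z))"
    and range: "\<And>s u. \<lbrakk>s \<in> {0..1}; u \<in> {0..1}\<rbrakk> \<Longrightarrow> \<alpha> s u \<in> {0..1}"
    and ends: "\<And>s. s \<in> {0..1} \<Longrightarrow> \<alpha> s 0 \<in> {0,1}" "\<And>s. s \<in> {0..1} \<Longrightarrow> \<alpha> s 1 \<in> {0,1}"
    and g: "\<And>t. t \<in> topspace (cube_top n) \<Longrightarrow> g t = f (t(0 := \<alpha> 0 (t 0)))"
    and h: "\<And>t. t \<in> topspace (cube_top n) \<Longrightarrow> h t = f (t(0 := \<alpha> 1 (t 0)))"
  shows "rel_homotopic n X x0 g h"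
proof -
  let ?Z = "prod_topology (top_of_set {0..1}) (cube_top n)"
  have \<alpha>_cube: "\<alpha> s (t 0) \<in> {0..1}" if "s \<in> {0..1}" "t \<in> topspace (cube_top n)" for s t
    using range[OF that(1) cube_coord_in_unit[OF that(2) n]] .
  have pair: "continuous_map ?Z (prod_topology (top_of_set {0..1}) (top_of_set {0..1}))
                (\<lambda>z. (fst z, snd z 0))"
    using continuous_map_compose[OF continuous_map_snd continuous_map_cube_coord[OF n]]
    by (intro continuous_map_pairedI continuous_map_fst) (simp add: o_def)
  have "continuous_map ?Z euclideanreal (\<lambda>z. \<alpha> (fst z) (snd z 0))"
    using continuous_map_compose[OF pair[unfolded prod_topology_subtopology_eu]
          cont[folded continuous_map_iff_continuous]]
    by (simp add: o_def)
  then have "continuous_map ?Z (cube_top n) (\<lambda>z. (snd z)(0 := \<alpha> (fst z) (snd z 0)))"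
    by (rule continuous_map_cube_fun_upd[OF n continuous_map_snd])
       (use \<alpha>_cube in \<open>fastforce simp: topspace_prod_topology\<close>)
  then have H: "continuous_map ?Z X (\<lambda>z. f ((snd z)(0 := \<alpha> (fst z) (snd z 0))))"
    using continuous_map_compose[OF _ Omega_set_continuous_map[OF f]] by (simp add: o_def)
  have "t(0 := \<alpha> s (t 0)) \<in> cube_boundary n" if s: "s \<in> {0..1}" and t: "t \<in> cube_boundary n" for s t
  proof (rule cube_boundary_fun_upd[OF t n])
    show "\<alpha> s (t 0) \<in> {0..1}"
      using t by (intro \<alpha>_cube s) (simp add: cube_boundary_def)
    show "\<alpha> s (t 0) \<in> {0,1}" if "t 0 \<in> {0,1}"
      using that ends[OF s] by auto
  qed
  then have "rel_homotopic n X x0 (\<lambda>t. f (t(0 := \<alpha> 0 (t 0)))) (\<lambda>t. f (t(0 := \<alpha> 1 (t 0))))"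
    unfolding rel_homotopic_def homotopic_with_def
    by (intro exI[of _ "\<lambda>z. f ((snd z)(0 := \<alpha> (fst z) (snd z 0)))"] conjI H)
       (auto intro!: Omega_set_boundary[OF f])
  then show ?thesis
    unfolding rel_homotopic_def
    by (rule homotopic_with_eq) (auto simp: g h cube_boundary_def)
qed

section \<open>Concatenation along the first coordinate\<close>

definition cube_join :: "((nat \<Rightarrow> real) \<Rightarrow> 'a) \<Rightarrow> ((nat \<Rightarrow> real) \<Rightarrow> 'a) \<Rightarrow> (nat \<Rightarrow> real) \<Rightarrow> 'a"
  where "cube_join g f = (\<lambda>t. if t 0 \<le> 1/2 then g (t(0 := 2 * t 0)) else f (t(0 := 2 * t 0 - 1)))"

definition cube_reverse :: "((nat \<Rightarrow> real) \<Rightarrow> 'a) \<Rightarrow> (nat \<Rightarrow> real) \<Rightarrow> 'a"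
  where "cube_reverse g = (\<lambda>t. g (t(0 := 1 - t 0)))"

lemma cube_reverse_reverse [simp]: "cube_reverse (cube_reverse g) = g"
  by (simp add: cube_reverse_def)

lemma cube_join_boundary:
  assumes n: "0 < n" and t: "t \<in> cube_boundary n"
    and g: "\<And>t. t \<in> cube_boundary n \<Longrightarrow> g t = x0"
    and f: "\<And>t. t \<in> cube_boundary n \<Longrightarrow> f t = x0"
  shows "cube_join g f t = x0"
proof -
  have "t \<in> topspace (cube_top n)"
    using t by (simp add: cube_boundary_def)
  then have t0: "t 0 \<in> {0..1}"
    using n by (rule cube_coord_in_unit)
  show ?thesis
  proof (cases "t 0 \<le> 1/2")
    case True
    with t0 have "t(0 := 2 * t 0) \<in> cube_boundary n"
      by (intro cube_boundary_fun_upd[OF t n]) auto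
    with True show ?thesis by (simp add: cube_join_def g)
  next
    case False
    with t0 have "t(0 := 2 * t 0 - 1) \<in> cube_boundary n"
      by (intro cube_boundary_fun_upd[OF t n]) auto
    with False show ?thesis by (simp add: cube_join_def f)
  qed
qed

lemma continuous_map_cube_join_family:
  assumes n: "0 < n"
    and K: "continuous_map (prod_topology Z (cube_top n)) X K"
    and L: "continuous_map (prod_topology Z (cube_top n)) X L"
    and K_boundary: "\<And>z t. \<lbrakk>z \<in> topspace Z; t \<in> cube_boundary n\<rbrakk> \<Longrightarrow> K (z, t) = x0"
    and L_boundary: "\<And>z t. \<lbrakk>z \<in> topspace Z; t \<in> cube_boundary n\<rbrakk> \<Longrightarrow> L (z, t) = x0"
  shows "continuous_map (prod_topology Z (cube_top n)) X
           (\<lambda>z. cube_join (\<lambda>t. K (fst z, t)) (\<lambda>t. L (fst z, t)) (snd z))"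
proof -
  let ?P = "prod_topology Z (cube_top n)"
  note coord_unit = prod_cube_coord_in_unit[OF _ n]
  have left: "continuous_map (subtopology ?P {z \<in> topspace ?P. snd z 0 \<le> 1/2}) X
                (\<lambda>z. K (fst z, (snd z)(0 := 2 * snd z 0)))"
  proof (rule continuous_map_prod_cube_rescale[OF n _ K, where v = "\<lambda>x. 2 * x"])
    show "2 * snd z 0 \<in> {0..1}" if "z \<in> topspace ?P" "z \<in> {z \<in> topspace ?P. snd z 0 \<le> 1/2}" for z
      using coord_unit[OF that(1)] that(2) by simp
  qed (intro continuous_intros)
  have right: "continuous_map (subtopology ?P {z \<in> topspace ?P. 1/2 \<le> snd z 0}) X
                 (\<lambda>z. L (fst z, (snd z)(0 := 2 * snd z 0 - 1)))"
  proof (rule continuous_map_prod_cube_rescale[OF n _ L, where v = "\<lambda>x. 2 * x - 1"])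
    show "2 * snd z 0 - 1 \<in> {0..1}" if "z \<in> topspace ?P" "z \<in> {z \<in> topspace ?P. 1/2 \<le> snd z 0}" for z
      using coord_unit[OF that(1)] that(2) by simp
  qed (intro continuous_intros)
  have seam: "K (fst z, (snd z)(0 := 2 * snd z 0)) = L (fst z, (snd z)(0 := 2 * snd z 0 - 1))"
    if z: "z \<in> topspace ?P" and half: "snd z 0 = 1/2" for z
  proof -
    have "fst z \<in> topspace Z" "snd z \<in> topspace (cube_top n)"
      using z by (simp_all add: topspace_prod_topology mem_Times_iff)
    then have "K (fst z, (snd z)(0 := 1)) = x0" "L (fst z, (snd z)(0 := 0)) = x0"
      by (simp_all add: K_boundary L_boundary fun_upd_in_cube_boundary n)
    moreover have "2 * snd z 0 = 1" "2 * snd z 0 - 1 = 0"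
      using half by simp_all
    ultimately show ?thesis
      by (simp only:)
  qed
  show ?thesis
    unfolding cube_join_def
    by (rule continuous_map_cases_le[OF continuous_map_prod_cube_coord[OF n] _ left right])
       (simp_all add: seam)
qed

lemma rel_homotopic_cube_join:
  assumes n: "0 < n" and "rel_homotopic n X x0 g g'" and "rel_homotopic n X x0 f f'"
  shows "rel_homotopic n X x0 (cube_join g f) (cube_join g' f')"
proof -
  let ?Z = "prod_topology (top_of_set {0..1::real}) (cube_top n)"
  obtain K where K: "continuous_map ?Z X K" "\<And>t. K (0, t) = g t" "\<And>t. K (1, t) = g' t"
    "\<And>s t. \<lbrakk>s \<in> {0..1}; t \<in> cube_boundary n\<rbrakk> \<Longrightarrow> K (s, t) = x0"
    using assms(2) unfolding rel_homotopic_def homotopic_with_def by auto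
  obtain L where L: "continuous_map ?Z X L" "\<And>t. L (0, t) = f t" "\<And>t. L (1, t) = f' t"
    "\<And>s t. \<lbrakk>s \<in> {0..1}; t \<in> cube_boundary n\<rbrakk> \<Longrightarrow> L (s, t) = x0"
    using assms(3) unfolding rel_homotopic_def homotopic_with_def by auto
  show ?thesis
    unfolding rel_homotopic_def homotopic_with_def
  proof (intro exI[of _ "\<lambda>z. cube_join (\<lambda>t. K (fst z, t)) (\<lambda>t. L (fst z, t)) (snd z)"] conjI allI ballI)
    show "continuous_map ?Z X (\<lambda>z. cube_join (\<lambda>t. K (fst z, t)) (\<lambda>t. L (fst z, t)) (snd z))"
      by (rule continuous_map_cube_join_family[OF n K(1) L(1)]) (simp_all add: K(4) L(4))
    fix s t assume "s \<in> {0..1::real}" and "t \<in> cube_boundary n"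
    then show "cube_join (\<lambda>u. K (fst (s, t), u)) (\<lambda>u. L (fst (s, t), u)) (snd (s, t)) = x0"
      using K(4) L(4) by (intro cube_join_boundary[OF n]) auto
  qed (simp_all add: K L)
qed

lemma cube_join_in_Omega:
  assumes n: "0 < n" and "g \<in> Omega_set n X x0" and "f \<in> Omega_set n X x0"
  shows "cube_join g f \<in> Omega_set n X x0"
  using rel_homotopic_cube_join[OF n rel_homotopic_refl[OF assms(2)] rel_homotopic_refl[OF assms(3)]]
  by (rule rel_homotopic_imp_Omega_set(1))

lemma cube_reverse_in_Omega:
  assumes n: "0 < n" and g: "g \<in> Omega_set n X x0"
  shows "cube_reverse g \<in> Omega_set n X x0"
proof -
  have "rel_homotopic n X x0 (cube_reverse g) (cube_reverse g)"
    by (rule rel_homotopic_reparametrize[OF n g, where \<alpha> = "\<lambda>s u. 1 - u"])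
       (auto simp: cube_reverse_def intro!: continuous_intros)
  then show ?thesis by (rule rel_homotopic_imp_Omega_set)
qed

lemma cube_join_reverse_left:
  assumes n: "0 < n" and g: "g \<in> Omega_set n X x0"
  shows "rel_homotopic n X x0 (cube_join (cube_reverse g) g) (\<lambda>t. x0)"
proof (rule rel_homotopic_reparametrize[OF n g, where \<alpha> = "\<lambda>s u. s + (1 - s) * \<bar>2 * u - 1\<bar>"])
  show "continuous_on ({0..1} \<times> {0..1}) (\<lambda>z::real \<times> real. fst z + (1 - fst z) * \<bar>2 * snd z - 1\<bar>)"
    by (intro continuous_intros)
  fix s u :: real assume s: "s \<in> {0..1}" and u: "u \<in> {0..1}"
  have "\<bar>2 * u - 1\<bar> \<le> 1"
    using u by auto
  then have "(1 - s) * \<bar>2 * u - 1\<bar> \<le> 1 - s"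
    using s by (simp add: mult_left_le)
  then show "s + (1 - s) * \<bar>2 * u - 1\<bar> \<in> {0..1}"
    using s by simp
next
  fix t assume t: "t \<in> topspace (cube_top n)"
  show "cube_join (cube_reverse g) g t = g (t(0 := 0 + (1 - 0) * \<bar>2 * t 0 - 1\<bar>))"
  proof (cases "t 0 \<le> 1/2")
    case True
    then have "\<bar>2 * t 0 - 1\<bar> = 1 - 2 * t 0" by simp
    with True show ?thesis by (simp add: cube_join_def cube_reverse_def)
  next
    case False
    then have "\<bar>2 * t 0 - 1\<bar> = 2 * t 0 - 1" by simp
    with False show ?thesis by (simp add: cube_join_def cube_reverse_def)
  qed
  show "x0 = g (t(0 := 1 + (1 - 1) * \<bar>2 * t 0 - 1\<bar>))"
    using Omega_set_face[OF g t n, of 1] by simp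
qed simp_all

lemma cube_join_const_left:
  assumes n: "0 < n" and f: "f \<in> Omega_set n X x0"
  shows "rel_homotopic n X x0 (cube_join (\<lambda>t. x0) f) f"
proof (rule rel_homotopic_reparametrize[OF n f, where \<alpha> = "\<lambda>s u. (1 - s) * max 0 (2 * u - 1) + s * u"])
  show "continuous_on ({0..1} \<times> {0..1}) (\<lambda>z::real \<times> real. (1 - fst z) * max 0 (2 * snd z - 1) + fst z * snd z)"
    by (intro continuous_intros)
  fix s u :: real assume s: "s \<in> {0..1}" and u: "u \<in> {0..1}"
  have "max 0 (2 * u - 1) \<in> {0..1}"
    using u by auto
  then have "(1 - s) * max 0 (2 * u - 1) + s * u \<le> (1 - s) * 1 + s * 1"
    using s u by (intro add_mono mult_left_mono) auto
  moreover have "0 \<le> (1 - s) * max 0 (2 * u - 1) + s * u"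
    using s u by auto
  ultimately show "(1 - s) * max 0 (2 * u - 1) + s * u \<in> {0..1}"
    by simp
next
  fix t assume t: "t \<in> topspace (cube_top n)"
  show "cube_join (\<lambda>t. x0) f t = f (t(0 := (1 - 0) * max 0 (2 * t 0 - 1) + 0 * t 0))"
    using Omega_set_face[OF f t n, of 0] by (simp add: cube_join_def)
qed simp_all

lemma cube_join_assoc:
  assumes n: "0 < n"
    and h: "h \<in> Omega_set n X x0" and g: "g \<in> Omega_set n X x0" and f: "f \<in> Omega_set n X x0"
  shows "rel_homotopic n X x0 (cube_join h (cube_join g f)) (cube_join (cube_join h g) f)"
proof -
  let ?w = "cube_join h (cube_join g f)"
  define \<beta> where "\<beta> u = min (2 * u) (min (u + 1/4) ((u + 1) / 2))" for u :: real
  have \<beta>_unit: "\<beta> u \<in> {0..1}" if "u \<in> {0..1}" for u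
    using that by (auto simp: \<beta>_def min_le_iff_disj)
  have \<beta>_reparam: "?w (t(0 := \<beta> (t 0))) = cube_join (cube_join h g) f t" for t
  proof (cases "t 0 \<le> 1/4")
    case True
    then have "\<beta> (t 0) = 2 * t 0" by (auto simp: \<beta>_def)
    with True show ?thesis by (simp add: cube_join_def)
  next
    case quarter: False
    show ?thesis
    proof (cases "t 0 \<le> 1/2")
      case True
      with quarter have "\<beta> (t 0) = t 0 + 1/4" by (auto simp: \<beta>_def)
      moreover have "2 * (t 0 + 1/4) - 1 = 2 * t 0 - 1/2" "2 * (2 * t 0 - 1/2) = 2 * (2 * t 0) - 1"
        by simp_all
      ultimately show ?thesis
        using True quarter by (simp add: cube_join_def)
    next
      case False
      with quarter have "\<beta> (t 0) = (t 0 + 1) / 2" by (auto simp: \<beta>_def)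
      then have "2 * \<beta> (t 0) - 1 = t 0" and "\<not> \<beta> (t 0) \<le> 1/2"
        using False by (simp_all add: field_simps)
      with False show ?thesis by (simp add: cube_join_def)
    qed
  qed
  show ?thesis
  proof (rule rel_homotopic_reparametrize[OF n, where \<alpha> = "\<lambda>s u. (1 - s) * u + s * \<beta> u"])
    show "?w \<in> Omega_set n X x0"
      by (intro cube_join_in_Omega n h g f)
    show "continuous_on ({0..1} \<times> {0..1}) (\<lambda>z::real \<times> real. (1 - fst z) * snd z + fst z * \<beta> (snd z))"
      unfolding \<beta>_def by (intro continuous_intros) auto
    fix s u :: real assume s: "s \<in> {0..1}" and u: "u \<in> {0..1}"
    have "(1 - s) * u + s * \<beta> u \<le> (1 - s) * 1 + s * 1"
      using s u \<beta>_unit[OF u] by (intro add_mono mult_left_mono) auto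
    moreover have "0 \<le> (1 - s) * u + s * \<beta> u"
      using s u \<beta>_unit[OF u] by auto
    ultimately show "(1 - s) * u + s * \<beta> u \<in> {0..1}"
      by simp
  qed (simp_all add: \<beta>_reparam, simp_all add: \<beta>_def)
qed

lemma cube_join_cancel_left:
  assumes n: "0 < n" and g: "g \<in> Omega_set n X x0" and f: "f \<in> Omega_set n X x0"
  shows "rel_homotopic n X x0 (cube_join (cube_reverse g) (cube_join g f)) f"
proof -
  have "rel_homotopic n X x0 (cube_join (cube_reverse g) (cube_join g f)) (cube_join (cube_join (cube_reverse g) g) f)"
    by (rule cube_join_assoc[OF n cube_reverse_in_Omega[OF n g] g f])
  also have "rel_homotopic n X x0 \<dots> (cube_join (\<lambda>t. x0) f)"
    by (rule rel_homotopic_cube_join[OF n cube_join_reverse_left[OF n g] rel_homotopic_refl[OF f]])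
  also have "rel_homotopic n X x0 \<dots> f"
    by (rule cube_join_const_left[OF n f])
  finally show ?thesis .
qed

section \<open>Left translations of the topologized homotopy group\<close>

lemma topspace_Omega_top: "topspace (Omega_top n X x0) = Omega_set n X x0"
  by (simp add: Omega_top_def)

lemma compactin_cube_right_half:
  assumes n: "0 < n" and C: "compactin (cube_top n) C"
  shows "compactin (cube_top n) ((\<lambda>t. t(0 := 2 * t 0 - 1)) ` {t \<in> C. 1/2 \<le> t 0})"
proof -
  let ?H = "subtopology (cube_top n) {t. 1/2 \<le> t 0}"
  have "closedin (cube_top n) {t \<in> topspace (cube_top n). t 0 \<in> {1/2..1}}"
    by (rule closedin_continuous_map_preimage[OF continuous_map_cube_coord[OF n]])
       (rule closed_subset, auto)
  then have "compactin (cube_top n) (C \<inter> {t \<in> topspace (cube_top n). t 0 \<in> {1/2..1}})"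
    by (rule compact_Int_closedin[OF C])
  moreover have "C \<inter> {t \<in> topspace (cube_top n). t 0 \<in> {1/2..1}} = {t \<in> C. 1/2 \<le> t 0}"
    using compactin_subset_topspace[OF C] cube_coord_in_unit[OF _ n] by auto
  ultimately have "compactin ?H {t \<in> C. 1/2 \<le> t 0}"
    by (simp add: compactin_subtopology subset_iff)
  moreover have "continuous_map ?H (cube_top n) (\<lambda>t. t(0 := 2 * t 0 - 1))"
  proof (rule continuous_map_cube_fun_upd[OF n])
    show "continuous_map ?H (cube_top n) (\<lambda>t. t)"
      by (simp add: continuous_map_from_subtopology)
    show "continuous_map ?H euclideanreal (\<lambda>t. 2 * t 0 - 1)"
      using continuous_map_cube_coord[OF n]
      by (intro continuous_intros continuous_map_from_subtopology) (simp add: continuous_map_in_subtopology)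
    show "2 * t 0 - 1 \<in> {0..1}" if "t \<in> topspace ?H" for t
      using that cube_coord_in_unit[OF _ n, of t] by auto
  qed
  ultimately show ?thesis
    by (rule image_compactin)
qed

lemma cube_join_image:
  assumes n: "0 < n" and g: "g \<in> Omega_set n X x0" and f: "f \<in> Omega_set n X x0"
    and C: "C \<subseteq> topspace (cube_top n)"
  shows "cube_join g f ` C =
           g ` (\<lambda>t. t(0 := 2 * t 0)) ` {t \<in> C. t 0 \<le> 1/2} \<union>
           f ` (\<lambda>t. t(0 := 2 * t 0 - 1)) ` {t \<in> C. 1/2 \<le> t 0}"
proof
  show "cube_join g f ` C \<subseteq> g ` (\<lambda>t. t(0 := 2 * t 0)) ` {t \<in> C. t 0 \<le> 1/2} \<union>
          f ` (\<lambda>t. t(0 := 2 * t 0 - 1)) ` {t \<in> C. 1/2 \<le> t 0}"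
    by (auto simp: cube_join_def)
  have "f (t(0 := 2 * t 0 - 1)) \<in> cube_join g f ` C" if t: "t \<in> C" "1/2 \<le> t 0" for t
  proof (cases "t 0 = 1/2")
    case True
    have t': "t \<in> topspace (cube_top n)"
      using t C by auto
    have seam: "2 * t 0 - 1 = 0" "2 * t 0 = 1" "t 0 \<le> 1/2"
      using True by simp_all
    have "f (t(0 := 2 * t 0 - 1)) = x0"
      unfolding seam(1) by (rule Omega_set_face[OF f t' n]) simp
    moreover have "cube_join g f t = x0"
      unfolding cube_join_def seam(2) using seam(3) Omega_set_face[OF g t' n, of 1] by simp
    ultimately show ?thesis
      using t by (metis image_eqI)
  next
    case False
    with t show ?thesis by (intro rev_image_eqI[of t]) (auto simp: cube_join_def)
  qed
  moreover have "g (t(0 := 2 * t 0)) \<in> cube_join g f ` C" if "t \<in> C" "t 0 \<le> 1/2" for t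
    using that by (intro rev_image_eqI[of t]) (simp_all add: cube_join_def)
  ultimately show "g ` (\<lambda>t. t(0 := 2 * t 0)) ` {t \<in> C. t 0 \<le> 1/2} \<union>
                     f ` (\<lambda>t. t(0 := 2 * t 0 - 1)) ` {t \<in> C. 1/2 \<le> t 0} \<subseteq> cube_join g f ` C"
    by blast
qed

lemma continuous_map_cube_join_left:
  assumes n: "0 < n" and g: "g \<in> Omega_set n X x0"
  shows "continuous_map (Omega_top n X x0) (Omega_top n X x0) (cube_join g)"
proof -
  have "continuous_map (Omega_top n X x0) (compact_open_topology (cube_top n) X) (cube_join g)"
    unfolding compact_open_topology_def
  proof (rule continuous_on_generated_topo)
    fix W assume "W \<in> {{f. f ` C \<subseteq> U} | C U. compactin (cube_top n) C \<and> openin X U}"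
    then obtain C U where W: "W = {f. f ` C \<subseteq> U}" and C: "compactin (cube_top n) C" and U: "openin X U"
      by auto
    let ?L = "(\<lambda>t. t(0 := 2 * t 0)) ` {t \<in> C. t 0 \<le> 1/2}"
    let ?R = "(\<lambda>t. t(0 := 2 * t 0 - 1)) ` {t \<in> C. 1/2 \<le> t 0}"
    have "cube_join g f \<in> W \<longleftrightarrow> g ` ?L \<subseteq> U \<and> f ` ?R \<subseteq> U" if "f \<in> Omega_set n X x0" for f
      using cube_join_image[OF n g that compactin_subset_topspace[OF C]] by (simp add: W)
    then have preimage: "cube_join g -` W \<inter> topspace (Omega_top n X x0) =
                 {f \<in> Omega_set n X x0. g ` ?L \<subseteq> U \<and> f ` ?R \<subseteq> U}"
      unfolding topspace_Omega_top by blast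
    have "openin (Omega_top n X x0) ({f. f ` ?R \<subseteq> U} \<inter> Omega_set n X x0)"
      unfolding Omega_top_def openin_subtopology
      using openin_compact_open_topology[OF compactin_cube_right_half[OF n C] U] by blast
    then show "openin (Omega_top n X x0) (cube_join g -` W \<inter> topspace (Omega_top n X x0))"
      unfolding preimage by (cases "g ` ?L \<subseteq> U") (simp_all add: Int_commute Collect_conj_eq)
  qed (use topspace_compact_open_topology[of "cube_top n" X] in \<open>simp add: compact_open_topology_def\<close>)
  then show ?thesis
    using cube_join_in_Omega[OF n g]
    by (simp add: Omega_top_def continuous_map_in_subtopology image_subset_iff)
qed

lemma topspace_pi_top: "topspace (pi_top n X x0) = htp_class n X x0 ` Omega_set n X x0"
  by (simp add: pi_top_def topspace_quotient_topology topspace_Omega_top)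

lemma continuous_map_pi_top_translation:
  assumes n: "0 < n" and g: "g \<in> Omega_set n X x0"
  obtains h where "continuous_map (pi_top n X x0) (pi_top n X x0) h"
    and "\<And>f. f \<in> Omega_set n X x0 \<Longrightarrow> h (htp_class n X x0 f) = htp_class n X x0 (cube_join g f)"
proof -
  have "htp_class n X x0 (cube_join g f) = htp_class n X x0 (cube_join g f')"
    if f: "f \<in> Omega_set n X x0" "f' \<in> Omega_set n X x0"
      and "htp_class n X x0 f = htp_class n X x0 f'" for f f'
  proof -
    have "rel_homotopic n X x0 f f'"
      using that by (simp add: htp_class_eq_iff)
    then have "rel_homotopic n X x0 (cube_join g f) (cube_join g f')"
      by (rule rel_homotopic_cube_join[OF n rel_homotopic_refl[OF g]])
    then show ?thesis
      using f by (simp add: htp_class_eq_iff cube_join_in_Omega n g)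
  qed
  then show thesis
    using that continuous_map_quotient_topology_lift[OF continuous_map_cube_join_left[OF n g],
        of "htp_class n X x0" "htp_class n X x0"]
    unfolding pi_top_def topspace_Omega_top by blast
qed

lemma homeomorphic_map_pi_top_translation:
  assumes n: "0 < n" and g: "g \<in> Omega_set n X x0"
  obtains h where "homeomorphic_map (pi_top n X x0) (pi_top n X x0) h"
    and "\<And>f. f \<in> Omega_set n X x0 \<Longrightarrow> h (htp_class n X x0 f) = htp_class n X x0 (cube_join g f)"
proof -
  have g': "cube_reverse g \<in> Omega_set n X x0"
    by (rule cube_reverse_in_Omega[OF n g])
  obtain h where h: "continuous_map (pi_top n X x0) (pi_top n X x0) h"
    "\<And>f. f \<in> Omega_set n X x0 \<Longrightarrow> h (htp_class n X x0 f) = htp_class n X x0 (cube_join g f)"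
    using continuous_map_pi_top_translation[OF n g] by blast
  obtain h' where h': "continuous_map (pi_top n X x0) (pi_top n X x0) h'"
    "\<And>f. f \<in> Omega_set n X x0 \<Longrightarrow> h' (htp_class n X x0 f) = htp_class n X x0 (cube_join (cube_reverse g) f)"
    using continuous_map_pi_top_translation[OF n g'] by blast
  have "homeomorphic_maps (pi_top n X x0) (pi_top n X x0) h h'"
    unfolding homeomorphic_maps_def
  proof (intro conjI ballI h(1) h'(1))
    fix A assume "A \<in> topspace (pi_top n X x0)"
    then obtain f where f: "f \<in> Omega_set n X x0" and A: "A = htp_class n X x0 f"
      by (auto simp: topspace_pi_top)
    show "h' (h A) = A"
      using cube_join_cancel_left[OF n g f]
      by (simp add: A f h h' htp_class_eq_iff cube_join_in_Omega n g g')
    show "h (h' A) = A"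
      using cube_join_cancel_left[OF n g' f]
      by (simp add: A f h h' htp_class_eq_iff cube_join_in_Omega n g g')
  qed
  then show thesis
    using that h(2) homeomorphic_maps_imp_map by blast
qed

theorem proposition3p2:
  fixes X :: "'a topology" and x0 :: 'a and n :: nat
  assumes "x0 \<in> topspace X" and "n \<ge> 1"
  shows "homogeneous_space (pi_top n X x0)"
  unfolding homogeneous_space_def topspace_pi_top
proof (intro ballI)
  have n: "0 < n"
    using assms(2) by simp
  fix a b assume "a \<in> htp_class n X x0 ` Omega_set n X x0" "b \<in> htp_class n X x0 ` Omega_set n X x0"
  then obtain f g where f: "f \<in> Omega_set n X x0" "a = htp_class n X x0 f"
    and g: "g \<in> Omega_set n X x0" "b = htp_class n X x0 g"
    by blast
  have f': "cube_reverse f \<in> Omega_set n X x0" and g': "cube_reverse g \<in> Omega_set n X x0"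
    using f g by (simp_all add: cube_reverse_in_Omega n)
  obtain h1 where h1: "homeomorphic_map (pi_top n X x0) (pi_top n X x0) h1"
    "\<And>k. k \<in> Omega_set n X x0 \<Longrightarrow> h1 (htp_class n X x0 k) = htp_class n X x0 (cube_join (cube_reverse f) k)"
    using homeomorphic_map_pi_top_translation[OF n f'] by blast
  obtain h2 where h2: "homeomorphic_map (pi_top n X x0) (pi_top n X x0) h2"
    "\<And>k. k \<in> Omega_set n X x0 \<Longrightarrow> h2 (htp_class n X x0 k) = htp_class n X x0 (cube_join g k)"
    using homeomorphic_map_pi_top_translation[OF n g(1)] by blast
  have "rel_homotopic n X x0 (cube_join (cube_reverse f) f) (cube_join (cube_reverse g) g)"
    using cube_join_reverse_left[OF n f(1)] rel_homotopic_sym[OF cube_join_reverse_left[OF n g(1)]]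
    by (rule rel_homotopic_trans)
  then have "h1 a = htp_class n X x0 (cube_join (cube_reverse g) g)"
    by (simp add: f h1(2) htp_class_eq_iff cube_join_in_Omega n g f' g')
  moreover have "rel_homotopic n X x0 (cube_join g (cube_join (cube_reverse g) g)) g"
    using cube_join_cancel_left[OF n g' g(1)] by simp
  ultimately have "h2 (h1 a) = b"
    by (simp add: g h2(2) htp_class_eq_iff cube_join_in_Omega n g')
  then show "\<exists>h. homeomorphic_map (pi_top n X x0) (pi_top n X x0) h \<and> h a = b"
    using homeomorphic_map_compose[OF h1(1) h2(1)] by (metis comp_apply)
qed

end
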